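(* Let $\mathbf v\in\mathbb Z^4$ satisfy $Q_{\mathcal D}(\mathbf v)=-4$, and let $\mathcal C$ be the set of all integers occurring as a coordinate of some element of the orbit $\mathcal A[\mathbf v]$ (the curvatures of the corresponding integral spherical Apollonian packing). Then the set of residues modulo $12$ of elements of $\mathcal C$ omits exactly three congruence classes modulo $12$.
   Context: $Q_{\mathcal D}(a,b,c,d)=2(a^2+b^2+c^2+d^2)-(a+b+c+d)^2$. $\mathbf S_i$ ($i=1,\dots,4$) is the $4\times4$ integer matrix replacing the $i$-th coordinate $a_i$ of a column vector by $2\sum_{j\ne i}a_j-a_i$, other coordinates fixed; the Apollonian group $\mathcal A$ is the subgroup of $GL(4,\mathbb Z)$ they generate, and $\mathcal A[\mathbf v]=\{\mathbf U\mathbf v:\mathbf U\in\mathcal A\}$. *)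

theory Defs
  imports "HOL-Analysis.Analysis"
begin

definition Q_D :: "int ^ 4 \<Rightarrow> int" where
  "Q_D v = 2 * (\<Sum>i\<in>UNIV. (v $ i)^2) - (\<Sum>i\<in>UNIV. v $ i)^2"

definition apollo_S :: "4 \<Rightarrow> int ^ 4 ^ 4" where
  "apollo_S i = (\<chi> r c. if r = i then (if c = i then -1 else 2)
                         else (if r = c then 1 else 0))"

inductive_set apollonian_group :: "(int ^ 4 ^ 4) set" where
  gen: "apollo_S i \<in> apollonian_group"
| one: "mat 1 \<in> apollonian_group"
| mult: "U \<in> apollonian_group \<Longrightarrow> V \<in> apollonian_group \<Longrightarrow> U ** V \<in> apollonian_group"
| inv: "U \<in> apollonian_group \<Longrightarrow> U ** W = mat 1 \<Longrightarrow> W ** U = mat 1 \<Longrightarrow> W \<in> apollonian_group"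

definition apollonian_orbit :: "int ^ 4 \<Rightarrow> (int ^ 4) set" where
  "apollonian_orbit v = {U *v v | U. U \<in> apollonian_group}"

definition curvatures :: "int ^ 4 \<Rightarrow> int set" where
  "curvatures v = {w $ i | w i. w \<in> apollonian_orbit v}"

end

theory Submission
  imports Defs "HOL-Number_Theory.Cong"
begin

text \<open>
  The generator \<open>S\<^sub>i\<close> replaces \<open>a\<^sub>i\<close> by \<open>2 s - 3 a\<^sub>i\<close> and the coordinate sum \<open>s\<close> by
  \<open>3 s - 4 a\<^sub>i\<close>. Hence the parity of \<open>s\<close> is invariant, and while \<open>s\<close> is even every generator
  fixes all coordinates modulo 4. Since \<open>Q\<^sub>D v = -4\<close> forces \<open>s\<close> to be even, all curvatures
  lie in the classes modulo 4 of the coordinates of \<open>v\<close>; reducing \<open>Q\<^sub>D v = -4\<close> modulo 16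
  shows that these are exactly three of the four classes. Modulo 3 nothing is lost: coordinate
  \<open>i\<close> of \<open>S\<^sub>i S\<^sub>j v\<close> is congruent to \<open>v\<^sub>i\<close> modulo 4 and to \<open>v\<^sub>j\<close> modulo 3, that of
  \<open>S\<^sub>i v\<close> is congruent to \<open>-s\<close> modulo 3, and reducing \<open>Q\<^sub>D v = -4\<close> modulo 3 shows that
  the \<open>v\<^sub>j\<close> together with \<open>-s\<close> meet every class modulo 3. By the Chinese remainder theorem
  the curvatures therefore meet exactly the nine classes modulo 12 above three classes modulo 4.
\<close>

lemma apollo_S_apply:
  "(apollo_S i *v w) $ j = (if j = i then 2 * (\<Sum>k\<in>UNIV. w $ k) - 3 * w $ i else w $ j)"
  unfolding apollo_S_def matrix_vector_mult_def
  using exhaust_4[of i] exhaust_4[of j]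
  by (elim disjE) (simp_all add: sum_4)

lemma sum_apollo_S:
  "(\<Sum>k\<in>UNIV. (apollo_S i *v w) $ k) = 3 * (\<Sum>k\<in>UNIV. w $ k) - 4 * w $ i"
  unfolding apollo_S_apply using exhaust_4[of i]
  by (elim disjE) (simp_all add: sum_4)

lemma apollo_S_involution: "apollo_S i ** apollo_S i = mat 1"
  unfolding apollo_S_def matrix_matrix_mult_def mat_def
  using exhaust_4[of i]
  by (elim disjE) (simp_all add: vec_eq_iff forall_4 sum_4)

lemma apollonian_group_image_eq:
  assumes closed: "\<And>i w. w \<in> X \<Longrightarrow> apollo_S i *v w \<in> X"
    and "U \<in> apollonian_group"
  shows "(\<lambda>w. U *v w) ` X = X"
  using \<open>U \<in> apollonian_group\<close>
proof (induction rule: apollonian_group.induct)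
  case (gen i)
  have "w \<in> (\<lambda>w. apollo_S i *v w) ` X" if "w \<in> X" for w
  proof
    show "w = apollo_S i *v (apollo_S i *v w)"
      by (simp add: matrix_vector_mul_assoc apollo_S_involution)
  qed (use that closed in blast)
  then show ?case using closed by blast
next
  case one
  then show ?case by simp
next
  case (mult U V)
  have "(\<lambda>w. (U ** V) *v w) ` X = (\<lambda>w. U *v w) ` (\<lambda>w. V *v w) ` X"
    by (simp add: image_image matrix_vector_mul_assoc)
  then show ?case by (simp add: mult.IH)
next
  case (inv U W)
  have "(\<lambda>w. W *v w) ` X = (\<lambda>w. (W ** U) *v w) ` X"
    by (subst inv.IH [symmetric]) (simp add: image_image matrix_vector_mul_assoc)
  then show ?case by (simp add: inv.hyps)
qed

lemma apollonian_orbit_subset: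
  assumes "\<And>i w. w \<in> X \<Longrightarrow> apollo_S i *v w \<in> X" and "v \<in> X"
  shows "apollonian_orbit v \<subseteq> X"
  using apollonian_group_image_eq [OF assms(1)] assms(2)
  unfolding apollonian_orbit_def by blast

lemma apollonian_group_curvature:
  "U \<in> apollonian_group \<Longrightarrow> (U *v v) $ i \<in> curvatures v"
  unfolding curvatures_def apollonian_orbit_def by blast

lemma even_Q_D_iff: "even (Q_D v) \<longleftrightarrow> even (\<Sum>k\<in>UNIV. v $ k)"
  unfolding Q_D_def by simp

lemma apollo_S_cong_4:
  assumes "even (\<Sum>k\<in>UNIV. w $ k)"
  shows "[(apollo_S i *v w) $ j = w $ j] (mod 4)"
proof -
  obtain m where "(\<Sum>k\<in>UNIV. w $ k) = 2 * m"
    using assms by blast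
  then show ?thesis
    by (simp add: apollo_S_apply cong_iff_dvd_diff algebra_simps)
qed

lemma even_sum_apollo_S:
  "even (\<Sum>k\<in>UNIV. w $ k) \<Longrightarrow> even (\<Sum>k\<in>UNIV. (apollo_S i *v w) $ k)"
  by (simp add: sum_apollo_S)

lemma apollonian_orbit_cong_4:
  assumes "even (\<Sum>k\<in>UNIV. v $ k)" and "w \<in> apollonian_orbit v"
  shows "[w $ j = v $ j] (mod 4)"
proof -
  let ?X = "{w. even (\<Sum>k\<in>UNIV. w $ k) \<and> (\<forall>j. [w $ j = v $ j] (mod 4))}"
  have "apollonian_orbit v \<subseteq> ?X"
  proof (rule apollonian_orbit_subset)
    fix i w
    assume "w \<in> ?X"
    then have even: "even (\<Sum>k\<in>UNIV. w $ k)" and "\<And>j. [w $ j = v $ j] (mod 4)"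
      by auto
    then have "[(apollo_S i *v w) $ j = v $ j] (mod 4)" for j
      using apollo_S_cong_4 [OF even] by (blast intro: cong_trans)
    with even_sum_apollo_S [OF even] show "apollo_S i *v w \<in> ?X"
      by simp
  qed (use assms(1) in simp)
  with assms(2) show ?thesis
    by blast
qed

lemma Q_D_cong:
  "(\<And>j. [v $ j = w $ j] (mod n)) \<Longrightarrow> [Q_D v = Q_D w] (mod n)"
  unfolding Q_D_def by (intro cong_diff cong_mult cong_pow cong_sum cong_add cong_refl)

lemma Q_D_cong_16:
  assumes "\<And>j. [v $ j = w $ j] (mod 4)" and "even (\<Sum>k\<in>UNIV. w $ k)"
  shows "[Q_D v = Q_D w] (mod 16)"
proof -
  have "\<forall>j. \<exists>m. v $ j = w $ j + 4 * m"
    using assms(1) by (metis cong_iff_lin cong_sym)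
  then obtain k where k: "\<And>j. v $ j = w $ j + 4 * k j"
    by metis
  define s t where "s = (\<Sum>j\<in>UNIV. w $ j)" and "t = (\<Sum>j\<in>UNIV. k j)"
  have "Q_D v = Q_D w + 16 * (\<Sum>j\<in>UNIV. w $ j * k j) - 8 * s * t
      + 16 * (2 * (\<Sum>j\<in>UNIV. (k j)^2) - t^2)"
    unfolding Q_D_def k s_def t_def sum_4 by algebra
  moreover have "16 dvd 8 * s * t"
    using assms(2) unfolding s_def by (auto elim!: evenE)
  ultimately show ?thesis
    by (simp add: cong_iff_dvd_diff)
qed

lemma Q_D_residues_mod_3:
  assumes "\<And>j. w $ j \<in> {0..<3}" and "[Q_D w = -4] (mod 3)"
  shows "{0..<3} \<subseteq> range (($) w) \<union> {- (\<Sum>k\<in>UNIV. w $ k) mod 3}"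
proof -
  have w: "w $ j \<in> {0, 1, 2}" for j
    using assms(1)[of j] by auto
  have "{0..<3::int} = {0, 1, 2}"
    by auto
  then show ?thesis
    using w[of 1] w[of 2] w[of 3] w[of 4] assms(2)
    unfolding Q_D_def sum_4 UNIV_4 cong_def
    by (elim insertE emptyE) simp_all
qed

lemma Q_D_residues_mod_4:
  assumes "\<And>j. w $ j \<in> {0..<4}" and "even (\<Sum>k\<in>UNIV. w $ k)"
    and "[Q_D w = -4] (mod 16)"
  shows "\<exists>r\<in>{0..<4}. \<forall>x\<in>{0..<4}. x \<in> range (($) w) \<longleftrightarrow> x \<noteq> r"
proof -
  have w: "w $ j \<in> {0, 1, 2, 3}" for j
    using assms(1)[of j] by auto
  have "{0..<4::int} = {0, 1, 2, 3}"
    by auto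
  then show ?thesis
    using w[of 1] w[of 2] w[of 3] w[of 4] assms(2,3)
    unfolding Q_D_def sum_4 UNIV_4 cong_def
    by (elim insertE emptyE) simp_all
qed

lemma coordinate_residues_mod_3_cover:
  assumes "Q_D v = -4"
  shows "{0..<3} \<subseteq> (\<lambda>j. v $ j mod 3) ` UNIV \<union> {- (\<Sum>k\<in>UNIV. v $ k) mod 3}"
proof -
  define w where "w = (\<chi> j. v $ j mod 3)"
  have w_cong: "[w $ j = v $ j] (mod 3)" for j
    by (simp add: w_def)
  have "w $ j \<in> {0..<3}" for j
    by (simp add: w_def)
  moreover have "[Q_D w = -4] (mod 3)"
    using Q_D_cong [OF w_cong] assms by simp
  ultimately have "{0..<3} \<subseteq> range (($) w) \<union> {- (\<Sum>k\<in>UNIV. w $ k) mod 3}"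
    by (rule Q_D_residues_mod_3)
  moreover have "range (($) w) = (\<lambda>j. v $ j mod 3) ` UNIV"
    by (simp add: w_def)
  moreover have "[- (\<Sum>k\<in>UNIV. w $ k) = - (\<Sum>k\<in>UNIV. v $ k)] (mod 3)"
    using cong_sum [OF w_cong] by (simp add: cong_minus_minus_iff)
  ultimately show ?thesis
    by (simp add: cong_def)
qed

lemma coordinate_residues_mod_4_miss_one:
  assumes "Q_D v = -4"
  obtains r where "r \<in> {0..<4}"
    and "\<And>x. x \<in> {0..<4} \<Longrightarrow> x \<in> (\<lambda>j. v $ j mod 4) ` UNIV \<longleftrightarrow> x \<noteq> r"
proof -
  define w where "w = (\<chi> j. v $ j mod 4)"
  have v_cong: "[v $ j = w $ j] (mod 4)" for j
    by (simp add: w_def)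
  have "even (\<Sum>k\<in>UNIV. v $ k)"
    using assms even_Q_D_iff by fastforce
  moreover have "[(\<Sum>k\<in>UNIV. v $ k) = (\<Sum>k\<in>UNIV. w $ k)] (mod 2)"
    using cong_sum [OF v_cong] by (rule cong_dvd_modulus) simp
  ultimately have "even (\<Sum>k\<in>UNIV. w $ k)"
    using cong_dvd_iff by blast
  moreover have "[Q_D w = -4] (mod 16)"
    using Q_D_cong_16 [OF v_cong \<open>even (\<Sum>k\<in>UNIV. w $ k)\<close>] assms cong_sym by simp
  moreover have "w $ j \<in> {0..<4}" for j
    by (simp add: w_def)
  ultimately show ?thesis
    using Q_D_residues_mod_4 [of w] that by (auto simp: w_def)
qed

lemma apollo_S_apply_self_cong_3:
  "[(apollo_S i *v v) $ i = - (\<Sum>k\<in>UNIV. v $ k)] (mod 3)"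
  by (simp add: apollo_S_apply cong_iff_dvd_diff algebra_simps)

lemma apollo_S_apply_twice_cong_3:
  "[((apollo_S i ** apollo_S j) *v v) $ i = v $ j] (mod 3)"
proof (cases "i = j")
  case True
  then show ?thesis
    by (simp add: apollo_S_involution)
next
  case False
  then have "((apollo_S i ** apollo_S j) *v v) $ i
      = v $ j + 3 * (2 * (\<Sum>k\<in>UNIV. v $ k) - 3 * v $ j - v $ i)"
    unfolding matrix_vector_mul_assoc [symmetric] apollo_S_apply [of i _ i] sum_apollo_S
    by (simp add: apollo_S_apply algebra_simps)
  then show ?thesis
    unfolding cong_def by (simp only: mod_mult_self2)
qed

lemma curvature_with_prescribed_residues:
  assumes "Q_D v = -4"
  shows "\<exists>c\<in>curvatures v. [c = v $ i] (mod 4) \<and> [c = y] (mod 3)"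
proof -
  have even: "even (\<Sum>k\<in>UNIV. v $ k)"
    using assms even_Q_D_iff by fastforce
  have realised: "\<exists>c\<in>curvatures v. [c = v $ i] (mod 4) \<and> [c = y] (mod 3)"
    if "U \<in> apollonian_group" and "[(U *v v) $ i = y] (mod 3)" for U
  proof (intro bexI conjI)
    show "(U *v v) $ i \<in> curvatures v"
      using \<open>U \<in> apollonian_group\<close> by (rule apollonian_group_curvature)
    show "[(U *v v) $ i = v $ i] (mod 4)"
      using apollonian_orbit_cong_4 [OF even] \<open>U \<in> apollonian_group\<close>
      unfolding apollonian_orbit_def by blast
    show "[(U *v v) $ i = y] (mod 3)"
      by (fact that(2))
  qed
  have "y mod 3 \<in> {0..<3}"
    by simp
  then have "y mod 3 \<in> (\<lambda>j. v $ j mod 3) ` UNIV \<union> {- (\<Sum>k\<in>UNIV. v $ k) mod 3}"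
    using coordinate_residues_mod_3_cover [OF assms] by blast
  then consider j where "[v $ j = y] (mod 3)" | "[- (\<Sum>k\<in>UNIV. v $ k) = y] (mod 3)"
    unfolding cong_def by auto
  then show ?thesis
  proof cases
    case (1 j)
    show ?thesis
    proof (rule realised)
      show "apollo_S i ** apollo_S j \<in> apollonian_group"
        by (intro apollonian_group.mult apollonian_group.gen)
      show "[((apollo_S i ** apollo_S j) *v v) $ i = y] (mod 3)"
        using apollo_S_apply_twice_cong_3 1 by (rule cong_trans)
    qed
  next
    case 2
    show ?thesis
    proof (rule realised)
      show "apollo_S i \<in> apollonian_group"
        by (rule apollonian_group.gen)
      show "[(apollo_S i *v v) $ i = y] (mod 3)"
        using apollo_S_apply_self_cong_3 2 by (rule cong_trans)
    qed
  qed
qed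

lemma curvature_residues_mod_12:
  assumes "Q_D v = -4"
  shows "(\<lambda>c. c mod 12) ` curvatures v = {x \<in> {0..<12}. x mod 4 \<in> (\<lambda>j. v $ j mod 4) ` UNIV}"
proof (intro equalityI subsetI)
  fix x
  assume "x \<in> (\<lambda>c. c mod 12) ` curvatures v"
  then obtain w i where x: "x = w $ i mod 12" and w: "w \<in> apollonian_orbit v"
    unfolding curvatures_def by blast
  have "even (\<Sum>k\<in>UNIV. v $ k)"
    using assms even_Q_D_iff by fastforce
  then have "x mod 4 = v $ i mod 4"
    using apollonian_orbit_cong_4 [OF _ w] by (simp add: x mod_mod_cancel cong_def)
  then show "x \<in> {x \<in> {0..<12}. x mod 4 \<in> (\<lambda>j. v $ j mod 4) ` UNIV}"
    by (simp add: x)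
next
  fix x
  assume "x \<in> {x \<in> {0..<12}. x mod 4 \<in> (\<lambda>j. v $ j mod 4) ` UNIV}"
  then obtain i where x: "x \<in> {0..<12}" "[x = v $ i] (mod 4)"
    unfolding cong_def by auto
  obtain c where c: "c \<in> curvatures v" "[c = v $ i] (mod 4)" "[c = x] (mod 3)"
    using curvature_with_prescribed_residues [OF assms] by blast
  have "[c = x] (mod 4 * 3)"
    using c(2) x(2) c(3) by (intro coprime_cong_mult)
      (auto intro: cong_trans cong_sym simp: coprime_iff_gcd_eq_1 gcd_non_0_int)
  then have "c mod 12 = x"
    using x(1) by (simp add: cong_def)
  with c(1) show "x \<in> (\<lambda>c. c mod 12) ` curvatures v"
    by blast
qed

lemma card_residue_class:
  fixes m n r :: int
  assumes "0 \<le> r" and "r < m" and "0 \<le> n"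
  shows "card {x \<in> {0..<m * n}. x mod m = r} = nat n"
proof -
  have "{x \<in> {0..<m * n}. x mod m = r} = (\<lambda>k. r + m * k) ` {0..<n}"
  proof (intro equalityI subsetI)
    fix x
    assume "x \<in> {x \<in> {0..<m * n}. x mod m = r}"
    then have x: "0 \<le> x" "x < m * n" "x mod m = r"
      by auto
    define q where "q = x div m"
    have x_eq: "x = r + m * q"
      using mult_div_mod_eq [of m x] x(3) unfolding q_def by linarith
    have "0 < m * (q + 1)"
      using x_eq x(1) assms(2) by (simp add: algebra_simps)
    moreover have "m * q < m * n"
      using x_eq x(2) assms(1) by linarith
    ultimately have "q \<in> {0..<n}"
      using assms by (simp add: zero_less_mult_iff)
    with x_eq show "x \<in> (\<lambda>k. r + m * k) ` {0..<n}"
      by blast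
  next
    fix x
    assume "x \<in> (\<lambda>k. r + m * k) ` {0..<n}"
    then obtain k where x: "x = r + m * k" and k: "k \<in> {0..<n}"
      by blast
    have "m * (k + 1) \<le> m * n"
      using k assms by (intro mult_left_mono) auto
    then show "x \<in> {x \<in> {0..<m * n}. x mod m = r}"
      using k assms by (simp add: x algebra_simps)
  qed
  moreover have "inj_on (\<lambda>k. r + m * k) {0..<n}"
    using assms by (intro inj_onI) simp
  ultimately show ?thesis
    by (simp add: card_image)
qed

theorem theorem5p1:
  fixes v :: "int ^ 4"
  assumes "Q_D v = -4"
  shows "card ({0..<12::int} - (\<lambda>c. c mod 12) ` curvatures v) = 3"
proof -
  let ?V = "(\<lambda>j. v $ j mod 4) ` UNIV"
  obtain r where r: "r \<in> {0..<4}" and V: "\<And>x. x \<in> {0..<4} \<Longrightarrow> x \<in> ?V \<longleftrightarrow> x \<noteq> r"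
    using coordinate_residues_mod_4_miss_one [OF assms] by blast
  have "{0..<12} - (\<lambda>c. c mod 12) ` curvatures v = {x \<in> {0..<4 * 3}. x mod 4 = r}"
    using V [of "_ mod 4"] by (auto simp: curvature_residues_mod_12 [OF assms])
  then show ?thesis
    using card_residue_class [of r 4 3] r by simp
qed

end
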